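(* Let $N\in\mathbb{N}$ and let $\{g_1,\ldots,g_h\}$ be a generating set for $\Gamma_1(N)$. For $i=1,\ldots,h$, let $\gamma_i\in\langle T,W\rangle g_i\langle T,W\rangle$ be a matrix with top row $(r_i\ \ b_i)$, and choose $m_i\in\mathbb{Z}$ with $m_i\mid\frac{r_i-1}N$. Then for any $q\in\mathbb{N}$ satisfying $(q,Nm_i)=1$ and $q\equiv Nm_ib_i\pmod{r_i}$ for every $i$, we have $H_q\supseteq\Gamma_1(N)$.
   Context: $T=\begin{pmatrix}1&1\\0&1\end{pmatrix}$, $W=\begin{pmatrix}1&0\\N&1\end{pmatrix}$. For $q\in\mathbb{N}$ coprime to $N$, $H_q$ denotes the subgroup of $\Gamma_0(N)$ generated by all matrices $\begin{pmatrix}A&B\\C&D\end{pmatrix}\in\Gamma_0(N)$ with $A=q$. *)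

theory Defs
  imports Main "HOL-Number_Theory.Cong"
begin

datatype m2 = M2 (ma: int) (mb: int) (mc: int) (md: int)

fun m2mult :: "m2 \<Rightarrow> m2 \<Rightarrow> m2" (infixl "\<bullet>" 70) where
  "M2 a b c d \<bullet> M2 a' b' c' d' = M2 (a*a' + b*c') (a*b' + b*d') (c*a' + d*c') (c*b' + d*d')"

definition m2one :: m2 where "m2one = M2 1 0 0 1"

fun m2inv :: "m2 \<Rightarrow> m2" where
  "m2inv (M2 a b c d) = M2 d (-b) (-c) a"

definition m2det :: "m2 \<Rightarrow> int" where
  "m2det g = ma g * md g - mb g * mc g"

definition SL2Z :: "m2 set" where
  "SL2Z = {g. m2det g = 1}"

definition Gamma0 :: "int \<Rightarrow> m2 set" where
  "Gamma0 N = {g \<in> SL2Z. N dvd mc g}"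

definition Gamma1 :: "int \<Rightarrow> m2 set" where
  "Gamma1 N = {g \<in> SL2Z. N dvd mc g \<and> [ma g = 1] (mod N) \<and> [md g = 1] (mod N)}"

inductive_set gen_subgroup :: "m2 set \<Rightarrow> m2 set" for S where
  gen_one: "m2one \<in> gen_subgroup S"
| gen_base: "s \<in> S \<Longrightarrow> s \<in> gen_subgroup S"
| gen_mult: "x \<in> gen_subgroup S \<Longrightarrow> y \<in> gen_subgroup S \<Longrightarrow> x \<bullet> y \<in> gen_subgroup S"
| gen_inv: "x \<in> gen_subgroup S \<Longrightarrow> m2inv x \<in> gen_subgroup S"

definition Tm :: m2 where "Tm = M2 1 1 0 1"
definition Wm :: "int \<Rightarrow> m2" where "Wm N = M2 1 0 N 1"

definition TW :: "int \<Rightarrow> m2 set" where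
  "TW N = gen_subgroup {Tm, Wm N}"

definition double_coset :: "m2 set \<Rightarrow> m2 \<Rightarrow> m2 set" where
  "double_coset H g = {x \<bullet> g \<bullet> y | x y. x \<in> H \<and> y \<in> H}"

definition Hq :: "int \<Rightarrow> int \<Rightarrow> m2 set" where
  "Hq N q = gen_subgroup {g \<in> Gamma0 N. ma g = q}"

end

theory Submission
  imports Defs
begin

text \<open>Since \<open>T\<close> and \<open>W\<close> lie in \<open>\<Gamma>\<^sub>1(N)\<close>, each \<open>\<gamma>\<^sub>i\<close> lies in \<open>\<Gamma>\<^sub>1(N)\<close>, and \<open>g\<^sub>i\<close> lies in
  \<open>H\<^sub>q\<close> as soon as \<open>\<gamma>\<^sub>i\<close> and \<open>T\<close>, \<open>W\<close> do. Completing \<open>(q, N m)\<close> to a first column gives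
  \<open>A\<^sub>0 \<in> \<Gamma>\<^sub>0(N)\<close> with top-left entry \<open>q\<close>; cancelling \<open>A\<^sub>0\<close> from \<open>A\<^sub>0 T\<^sup>k\<close> and \<open>W A\<^sub>0\<close> puts
  \<open>T\<close>, \<open>W\<close> into \<open>H\<^sub>q\<close>. Finally, with \<open>r - 1 = N m s\<close>, the congruence \<open>q \<equiv> N m b (mod r)\<close>
  yields \<open>k\<close> with \<open>\<gamma> T\<^sup>-\<^sup>k A\<^sub>0\<close> having top-left entry \<open>q\<close>, so \<open>\<gamma> \<in> H\<^sub>q\<close>.\<close>

lemma m2mult_assoc: "(x \<bullet> y) \<bullet> z = x \<bullet> (y \<bullet> z)"
  by (cases x; cases y; cases z) (simp add: algebra_simps)

lemma m2mult_one_left [simp]: "m2one \<bullet> x = x"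
  by (cases x) (simp add: m2one_def)

lemma m2mult_one_right [simp]: "x \<bullet> m2one = x"
  by (cases x) (simp add: m2one_def)

lemma m2inv_mult_left: "m2det x = 1 \<Longrightarrow> m2inv x \<bullet> x = m2one"
  by (cases x) (simp add: m2one_def m2det_def algebra_simps)

lemma m2inv_mult_right: "m2det x = 1 \<Longrightarrow> x \<bullet> m2inv x = m2one"
  by (cases x) (simp add: m2one_def m2det_def algebra_simps)

lemma m2det_mult: "m2det (x \<bullet> y) = m2det x * m2det y"
  by (cases x; cases y) (simp add: m2det_def algebra_simps)

lemma m2det_inv: "m2det (m2inv x) = m2det x"
  by (cases x) (simp add: m2det_def algebra_simps)

lemma m2det_one: "m2det m2one = 1"
  by (simp add: m2det_def m2one_def)

lemma gen_subgroup_mono: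
  assumes "S \<subseteq> gen_subgroup S'" "x \<in> gen_subgroup S"
  shows "x \<in> gen_subgroup S'"
  using assms(2) by induction (use assms(1) in \<open>auto intro: gen_subgroup.intros\<close>)

lemma gen_subgroup_SL2Z:
  assumes "S \<subseteq> SL2Z" "x \<in> gen_subgroup S"
  shows "x \<in> SL2Z"
  using assms(2) by induction
    (use assms(1) in \<open>auto simp: SL2Z_def m2det_mult m2det_inv m2det_one\<close>)

lemma gen_subgroup_cancel_left:
  assumes "S \<subseteq> SL2Z" "a \<in> gen_subgroup S" "a \<bullet> x \<in> gen_subgroup S"
  shows "x \<in> gen_subgroup S"
proof -
  have "m2det a = 1" using gen_subgroup_SL2Z[OF assms(1,2)] by (simp add: SL2Z_def)
  then have "m2inv a \<bullet> (a \<bullet> x) = x"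
    by (simp add: m2mult_assoc[symmetric] m2inv_mult_left)
  moreover have "m2inv a \<bullet> (a \<bullet> x) \<in> gen_subgroup S"
    using assms(2,3) by (blast intro: gen_mult gen_inv)
  ultimately show ?thesis by simp
qed

lemma gen_subgroup_cancel_right:
  assumes "S \<subseteq> SL2Z" "b \<in> gen_subgroup S" "x \<bullet> b \<in> gen_subgroup S"
  shows "x \<in> gen_subgroup S"
proof -
  have "m2det b = 1" using gen_subgroup_SL2Z[OF assms(1,2)] by (simp add: SL2Z_def)
  then have "(x \<bullet> b) \<bullet> m2inv b = x"
    by (simp add: m2mult_assoc m2inv_mult_right)
  moreover have "(x \<bullet> b) \<bullet> m2inv b \<in> gen_subgroup S"
    using assms(2,3) by (blast intro: gen_mult gen_inv)
  ultimately show ?thesis by simp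
qed

lemma double_coset_mem_gen_subgroup:
  assumes "H \<subseteq> gen_subgroup S" "g \<in> gen_subgroup S" "\<gamma> \<in> double_coset H g"
  shows "\<gamma> \<in> gen_subgroup S"
  using assms unfolding double_coset_def by (blast intro: gen_mult)

lemma double_coset_cancel:
  assumes "S \<subseteq> SL2Z" "H \<subseteq> gen_subgroup S" "\<gamma> \<in> double_coset H g" "\<gamma> \<in> gen_subgroup S"
  shows "g \<in> gen_subgroup S"
proof -
  obtain x y where "x \<in> H" "y \<in> H" "\<gamma> = x \<bullet> (g \<bullet> y)"
    using assms(3) unfolding double_coset_def by (auto simp: m2mult_assoc)
  then show ?thesis
    using assms(1,2,4) by (meson gen_subgroup_cancel_left gen_subgroup_cancel_right subsetD)
qed

lemma TW_subset_gen_subgroup: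
  assumes "Tm \<in> gen_subgroup S" "Wm N \<in> gen_subgroup S"
  shows "TW N \<subseteq> gen_subgroup S"
  using assms gen_subgroup_mono[of "{Tm, Wm N}" S] unfolding TW_def by blast

lemma TW_subset_Gamma1_generators:
  assumes "gen_subgroup S = Gamma1 N"
  shows "TW N \<subseteq> gen_subgroup S"
  by (rule TW_subset_gen_subgroup)
    (simp_all add: assms Tm_def Wm_def Gamma1_def SL2Z_def m2det_def)

lemma Hq_generators_SL2Z: "{g \<in> Gamma0 N. ma g = q} \<subseteq> SL2Z"
  by (auto simp: Gamma0_def)

lemma Hq_memI: "A \<in> Gamma0 N \<Longrightarrow> ma A = q \<Longrightarrow> A \<in> Hq N q"
  unfolding Hq_def by (rule gen_base) simp

lemma Gamma0_first_column_exists: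
  fixes q c N :: int
  assumes "coprime q c" "N dvd c"
  obtains b d where "M2 q b c d \<in> Gamma0 N"
proof -
  obtain u v where "u * q + v * c = gcd q c" using bezout_int by blast
  with assms(1) have "u * q + v * c = 1" by simp
  then have "M2 q (-v) c u \<in> Gamma0 N"
    using assms(2) by (simp add: Gamma0_def SL2Z_def m2det_def algebra_simps)
  then show ?thesis by (rule that)
qed

lemma translation_mem_Hq:
  fixes q N k :: int
  assumes "coprime q N"
  shows "M2 1 k 0 1 \<in> Hq N q"
proof -
  obtain b d where A: "M2 q b N d \<in> Gamma0 N"
    using Gamma0_first_column_exists[OF assms dvd_refl] .
  have "M2 q b N d \<bullet> M2 1 k 0 1 \<in> Gamma0 N"
    using A by (simp add: Gamma0_def SL2Z_def m2det_def algebra_simps)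
  then have "M2 q b N d \<bullet> M2 1 k 0 1 \<in> Hq N q" by (rule Hq_memI) simp
  moreover have "M2 q b N d \<in> Hq N q" using A by (rule Hq_memI) simp
  ultimately show ?thesis
    unfolding Hq_def by (rule gen_subgroup_cancel_left[OF Hq_generators_SL2Z, rotated])
qed

lemma Wm_mem_Hq:
  fixes q N :: int
  assumes "coprime q N"
  shows "Wm N \<in> Hq N q"
proof -
  obtain b d where A: "M2 q b N d \<in> Gamma0 N"
    using Gamma0_first_column_exists[OF assms dvd_refl] .
  have "Wm N \<bullet> M2 q b N d \<in> Gamma0 N"
    using A by (simp add: Wm_def Gamma0_def SL2Z_def m2det_def algebra_simps)
  then have "Wm N \<bullet> M2 q b N d \<in> Hq N q" by (rule Hq_memI) (simp add: Wm_def)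
  moreover have "M2 q b N d \<in> Hq N q" using A by (rule Hq_memI) simp
  ultimately show ?thesis
    unfolding Hq_def by (rule gen_subgroup_cancel_right[OF Hq_generators_SL2Z, rotated])
qed

lemma TW_subset_Hq: "coprime q N \<Longrightarrow> TW N \<subseteq> Hq N q"
  unfolding Hq_def
  using translation_mem_Hq[of q N 1] Wm_mem_Hq[of q N]
  by (intro TW_subset_gen_subgroup) (simp_all add: Hq_def Tm_def)

text \<open>Here \<open>n = N m\<close>: the shift \<open>k\<close> solves \<open>b + q s = r k\<close>, solvable since \<open>r - n s = 1\<close>
  makes \<open>r\<close> coprime to \<open>n\<close>.\<close>

lemma top_left_shift_exists:
  fixes r b q n s :: int
  assumes rs: "r - 1 = n * s" and cg: "[q = n * b] (mod r)"
  shows "\<exists>k. r * q + n * (b - r * k) = q"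
proof -
  have "coprime r n"
  proof (rule coprimeI)
    fix e assume "e dvd r" "e dvd n"
    then have "e dvd r - n * s" by (simp add: dvd_diff)
    also have "r - n * s = 1" using rs by simp
    finally show "is_unit e" .
  qed
  moreover have "r dvd n * (b + q * s)"
  proof -
    have "r dvd (n * b - q) + q * r"
      using cg by (simp add: cong_iff_dvd_diff dvd_diff_commute)
    also have "(n * b - q) + q * r = n * (b + q * s)"
      using rs by (simp add: algebra_simps)
    finally show ?thesis .
  qed
  ultimately obtain k where k: "b + q * s = r * k"
    by (metis coprime_dvd_mult_right_iff dvdE)
  have "r * q + n * (b - r * k) = q * (r - n * s) + n * (b + q * s - r * k)"
    by (simp add: algebra_simps)
  also have "\<dots> = q" using k rs by simp
  finally show ?thesis ..
qed

lemma Gamma1_mem_Hq: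
  fixes q N m :: int
  assumes N: "N \<ge> 1" and \<gamma>: "\<gamma> \<in> Gamma1 N"
    and mdiv: "m dvd (ma \<gamma> - 1) div N"
    and cop: "coprime q (N * m)"
    and cg: "[q = N * m * mb \<gamma>] (mod ma \<gamma>)"
  shows "\<gamma> \<in> Hq N q"
proof -
  obtain r b c d where \<gamma>_eq: "\<gamma> = M2 r b c d" by (cases \<gamma>)
  have Nc: "N dvd c" and "[r = 1] (mod N)"
    using \<gamma> \<gamma>_eq by (auto simp: Gamma1_def)
  then obtain t where t: "r - 1 = N * t" by (auto simp: cong_iff_dvd_diff)
  moreover have "(r - 1) div N = t" using t N by simp
  ultimately obtain s where rs: "r - 1 = (N * m) * s"
    using mdiv \<gamma>_eq by (auto elim!: dvdE)
  obtain k where k: "r * q + (N * m) * (b - r * k) = q"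
    using top_left_shift_exists[OF rs] cg \<gamma>_eq by auto
  obtain x z where A0: "M2 q x (N * m) z \<in> Gamma0 N"
    using Gamma0_first_column_exists[OF cop dvd_triv_left] .
  define A where "A = M2 1 (- k) 0 1 \<bullet> M2 q x (N * m) z"
  have "M2 1 (- k) 0 1 \<in> Hq N q" using cop by (simp add: translation_mem_Hq)
  moreover have "M2 q x (N * m) z \<in> Hq N q" using A0 by (rule Hq_memI) simp
  ultimately have AH: "A \<in> Hq N q" unfolding A_def Hq_def by (rule gen_mult)
  have "\<gamma> \<bullet> A \<in> SL2Z"
    using \<gamma> gen_subgroup_SL2Z[OF Hq_generators_SL2Z AH[unfolded Hq_def]]
    by (simp add: Gamma1_def SL2Z_def m2det_mult)
  moreover have "N dvd mc (\<gamma> \<bullet> A)"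
    using Nc by (simp add: \<gamma>_eq A_def)
  ultimately have "\<gamma> \<bullet> A \<in> Gamma0 N" by (simp add: Gamma0_def)
  moreover have "ma (\<gamma> \<bullet> A) = q"
    using k by (simp add: \<gamma>_eq A_def algebra_simps)
  ultimately have "\<gamma> \<bullet> A \<in> Hq N q" by (rule Hq_memI)
  with AH show ?thesis
    unfolding Hq_def by (rule gen_subgroup_cancel_right[OF Hq_generators_SL2Z])
qed

theorem lemma4p13:
  fixes N :: nat and h :: nat and g \<gamma> :: "nat \<Rightarrow> m2" and m :: "nat \<Rightarrow> int" and q :: nat
  assumes "N \<ge> 1" and "q \<ge> 1"
    and gens: "gen_subgroup (g ` {1..h}) = Gamma1 (int N)"
    and gam: "\<forall>i\<in>{1..h}. \<gamma> i \<in> double_coset (TW (int N)) (g i)"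
    and mdiv: "\<forall>i\<in>{1..h}. m i dvd (ma (\<gamma> i) - 1) div int N"
    and cop: "\<forall>i\<in>{1..h}. coprime (int q) (int N * m i)"
    and cong: "\<forall>i\<in>{1..h}. [int q = int N * m i * mb (\<gamma> i)] (mod ma (\<gamma> i))"
  shows "Gamma1 (int N) \<subseteq> Hq (int N) (int q)"
proof -
  let ?S = "g ` {1..h}"
  have "g i \<in> Hq (int N) (int q)" if i: "i \<in> {1..h}" for i
  proof -
    have "\<gamma> i \<in> Gamma1 (int N)"
      using double_coset_mem_gen_subgroup[OF TW_subset_Gamma1_generators[OF gens]]
        gam i gens by (metis gen_base imageI)
    then have "\<gamma> i \<in> Hq (int N) (int q)"
      by (rule Gamma1_mem_Hq[where m = "m i", rotated]) (use assms i in auto)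
    moreover have "TW (int N) \<subseteq> Hq (int N) (int q)"
      using TW_subset_Hq cop i by simp
    ultimately show ?thesis
      using double_coset_cancel[OF Hq_generators_SL2Z] gam i unfolding Hq_def by blast
  qed
  then show ?thesis
    using gens gen_subgroup_mono[of ?S "{A \<in> Gamma0 (int N). ma A = int q}"]
    unfolding Hq_def by blast
qed

end
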